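(* Let $\vec r_1,\vec r_2$ be in the closed unit ball of $\mathbb{R}^3$, both orthogonal to $(0,0,1)$, with $r_i=|\vec r_i|$. Then $$d^2_{z,2}(\rho(\vec r_1),\rho(\vec r_2))=\sqrt{1-\min(r_1,r_2)^2}-\sqrt{1-\max(r_1,r_2)^2}.$$
   Context: Qubit setting: $\mathcal{H}=\mathbb{C}^2$, $\mathcal{H}^*$ is identified with $\mathbb{C}^2$ via the dual basis, and $A^T$ is the usual matrix transpose; operators on $\mathcal{H}\otimes\mathcal{H}^*$ are $4\times4$ matrices in the basis $e_1\otimes e_1^*,e_1\otimes e_2^*,e_2\otimes e_1^*,e_2\otimes e_2^*$. $\sigma_x=\begin{pmatrix}0&1\\1&0\end{pmatrix}$, $\sigma_y=\begin{pmatrix}0&-i\\i&0\end{pmatrix}$, $\sigma_z=\begin{pmatrix}1&0\\0&-1\end{pmatrix}$, $\vec\sigma=(\sigma_x,\sigma_y,\sigma_z)$, and $\rho(\vec r)=\tfrac12(I+\vec r\cdot\vec\sigma)$ for $|\vec r|\le1$. The set of couplings of states $\rho,\omega$ is $\mathcal{C}(\rho,\omega)=\{\Pi\in\mathcal{S}(\mathcal{H}\otimes\mathcal{H}^* ):\mathrm{tr}_{\mathcal{H}^*}[\Pi]=\omega,\ \mathrm{tr}_{\mathcal{H}}[\Pi]=\rho^T\}$. $C_{z,2}=(\sigma_z\otimes I^T-I\otimes\sigma_z^T)^2=\mathrm{diag}(0,4,4,0)$, $D^2_{z,2}(\rho,\omega)=\min_{\Pi\in\mathcal{C}(\rho,\omega)}\mathrm{tr}[\Pi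 C_{z,2}]$, and $d_{z,2}(\rho,\omega)=\big(D^2_{z,2}(\rho,\omega)-\tfrac12(D^2_{z,2}(\rho,\rho)+D^2_{z,2}(\omega,\omega))\big)^{1/2}$. *)

theory Defs
  imports "HOL-Analysis.Analysis"
begin

(* Qubit: H = C^2 indexed by the type 2 (index 0 ~ e_1, index 1 ~ e_2).
   Operators on H (x) H^dual are matrices indexed by pairs (i,j) ~ e_i (x) e_j^*. *)

type_synonym qmat = "complex^2^2"
type_synonym qqmat = "complex^(2 \<times> 2)^(2 \<times> 2)"

definition sigma_x :: qmat where
  "sigma_x = (\<chi> i j. if i \<noteq> j then 1 else 0)"

definition sigma_y :: qmat where
  "sigma_y = (\<chi> i j. if i = j then 0 else if i = 0 then - \<i> else \<i>)"

definition sigma_z :: qmat where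
  "sigma_z = (\<chi> i j. if i = j then (if i = 0 then 1 else -1) else 0)"

definition rho :: "real^3 \<Rightarrow> qmat" where
  "rho r = (1/2) *\<^sub>R (mat 1 + (r$1) *\<^sub>R sigma_x
                        + (r$2) *\<^sub>R sigma_y
                        + (r$3) *\<^sub>R sigma_z)"

definition kron :: "qmat \<Rightarrow> qmat \<Rightarrow> qqmat" where
  "kron A B = (\<chi> p q. A $ fst p $ fst q * B $ snd p $ snd q)"

definition psd :: "complex^'n^'n \<Rightarrow> bool" where
  "psd A \<longleftrightarrow> (\<forall>v::complex^'n.
     Im (\<Sum>i\<in>UNIV. \<Sum>j\<in>UNIV. cnj (v$i) * A$i$j * v$j) = 0 \<and>
     Re (\<Sum>i\<in>UNIV. \<Sum>j\<in>UNIV. cnj (v$i) * A$i$j * v$j) \<ge> 0)"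

definition states2 :: "qqmat set" where
  "states2 = {P. psd P \<and> trace P = 1}"

definition ptrace_dual :: "qqmat \<Rightarrow> qmat" where
  "ptrace_dual P = (\<chi> i i'. \<Sum>j\<in>UNIV. P $ (i,j) $ (i',j))"

definition ptrace_H :: "qqmat \<Rightarrow> qmat" where
  "ptrace_H P = (\<chi> j j'. \<Sum>i\<in>UNIV. P $ (i,j) $ (i,j'))"

definition couplings :: "qmat \<Rightarrow> qmat \<Rightarrow> qqmat set" where
  "couplings r w = {P \<in> states2. ptrace_dual P = w \<and> ptrace_H P = transpose r}"

definition C_z2 :: qqmat where
  "C_z2 = (let M = kron sigma_z (transpose (mat 1)) - kron (mat 1) (transpose sigma_z)
           in M ** M)"

definition D2_z2 :: "qmat \<Rightarrow> qmat \<Rightarrow> real" where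
  "D2_z2 r w = Inf ((\<lambda>P. Re (trace (P ** C_z2))) ` couplings r w)"

definition d_z2 :: "qmat \<Rightarrow> qmat \<Rightarrow> real" where
  "d_z2 r w = sqrt (D2_z2 r w - (1/2) * (D2_z2 r r + D2_z2 w w))"

end

(* On the equator, rho r = 1/2 K(zeta) with K(zeta) the 2x2 matrix with unit diagonal and
   off-diagonal entries zeta, conj zeta, and |zeta| = |r|.  For a coupling P the cost tr[P C] is
   4w, where w is the weight P puts on e1 (x) e2* and e2 (x) e1*.  An off-diagonal entry of either
   marginal is a sum of two off-diagonal entries of P; bounding each by the corresponding 2x2
   principal minor of the positive matrix P and applying Cauchy-Schwarz gives
   |zeta|^2 <= 4w(1-w), i.e. 4w >= 2 - 2 sqrt(1 - m^2) with m the larger of |r1|, |r2|.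
   Equality is attained by the Gram matrix of product vectors c_ij u_i (x) v_j, where (u_0, u_1)
   and (v_0, v_1) are pairs of unit vectors with the prescribed overlaps.  So
   D^2 = 2 - 2 sqrt(1 - max(r1,r2)^2), and d^2 is the resulting combination of three such values. *)

theory Submission
  imports Defs
begin

lemma UNIV_2_zero_one: "(UNIV::2 set) = {0, 1}"
  using exhaust_2 by (metis UNIV_2 insert_commute zero_neq_one_class.zero_neq_one)

lemma exhaust_2_zero_one: "(i::2) = 0 \<or> i = 1"
  using UNIV_2_zero_one by blast

lemma forall_2_zero_one: "(\<forall>i::2. P i) \<longleftrightarrow> P 0 \<and> P 1"
  by (metis exhaust_2_zero_one)

lemma sum_UNIV_2: "sum f (UNIV::2 set) = f 0 + f 1"
  by (simp add: UNIV_2_zero_one)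

lemma sum_UNIV_2_times_2: "sum f (UNIV::(2 \<times> 2) set) = f (0,0) + f (0,1) + f (1,0) + f (1,1)"
  unfolding UNIV_Times_UNIV[symmetric] sum.cartesian_product' sum_UNIV_2 by (simp add: add.assoc)

lemma cnj_mult_self: "cnj z * z = of_real ((cmod z)\<^sup>2)"
  by (metis complex_norm_square mult.commute)

lemma le_mult_of_quadratic_nonneg:
  fixes p q k :: real
  assumes quad: "\<And>t. 0 \<le> p * t\<^sup>2 - 2 * k * t + k * q" and "0 \<le> p" "0 \<le> q"
  shows "k \<le> p * q"
proof (cases "p = 0")
  case True
  then show ?thesis using quad[of q] quad[of 1] by auto
next
  case False
  with \<open>0 \<le> p\<close> have "0 < p" by simp
  have "0 \<le> p * (k/p)\<^sup>2 - 2 * k * (k/p) + k * q" by (rule quad)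
  then have "0 \<le> k * (p * q - k)"
    using \<open>0 < p\<close> by (simp add: power2_eq_square field_simps zero_le_divide_iff)
  moreover have "0 \<le> p * q" using assms(2,3) by simp
  ultimately show ?thesis by (smt (verit) mult_pos_neg)
qed

lemma square_add_le_mult_add:
  fixes x y a b c d :: real
  assumes "x\<^sup>2 \<le> a * b" "y\<^sup>2 \<le> c * d" "0 \<le> x" "0 \<le> y" "0 \<le> a" "0 \<le> b" "0 \<le> c" "0 \<le> d"
  shows "(x + y)\<^sup>2 \<le> (a + c) * (b + d)"
proof -
  have "(x * y)\<^sup>2 \<le> (a * d) * (b * c)"
    using mult_mono[OF assms(1,2)] assms(5-8) by (simp add: power_mult_distrib mult_ac)
  then have "x * y \<le> sqrt ((a * d) * (b * c))"
    by (rule real_le_rsqrt)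
  also have "\<dots> \<le> (a * d + b * c) / 2"
    using assms(5-8) by (intro arith_geo_mean_sqrt) simp_all
  finally show ?thesis
    using assms(1,2) by (simp add: power2_sum algebra_simps)
qed

lemma abs_one_minus_double_le_sqrt:
  fixes x a :: real
  assumes "x \<le> 4 * a * (1 - a)"
  shows "\<bar>1 - 2 * a\<bar> \<le> sqrt (1 - x)"
proof -
  have "(1 - 2 * a)\<^sup>2 \<le> 1 - x" using assms by (simp add: power2_eq_square algebra_simps)
  then show ?thesis using real_sqrt_le_mono by fastforce
qed

lemma psd_two_point:
  fixes P :: "complex^'n^'n" and a b :: complex
  assumes "psd P"
  shows "Im (cnj a * a * P$i$i + cnj a * b * P$i$j + cnj b * a * P$j$i + cnj b * b * P$j$j) = 0"
    and "0 \<le> Re (cnj a * a * P$i$i + cnj a * b * P$i$j + cnj b * a * P$j$i + cnj b * b * P$j$j)"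
proof -
  define v :: "complex^'n" where "v = (\<chi> k. (if k = i then a else 0) + (if k = j then b else 0))"
  have "(\<Sum>l\<in>UNIV. cnj (v$k) * P$k$l * v$l)
      = (\<Sum>l\<in>UNIV. if l = i then cnj (v$k) * P$k$l * a else 0)
        + (\<Sum>l\<in>UNIV. if l = j then cnj (v$k) * P$k$l * b else 0)" for k
    unfolding sum.distrib[symmetric] by (rule sum.cong) (simp_all add: v_def distrib_left)
  then have "(\<Sum>k\<in>UNIV. \<Sum>l\<in>UNIV. cnj (v$k) * P$k$l * v$l)
      = (\<Sum>k\<in>UNIV. cnj (v$k) * P$k$i * a + cnj (v$k) * P$k$j * b)"
    by simp
  also have "\<dots> = (\<Sum>k\<in>UNIV. if k = i then cnj a * P$k$i * a + cnj a * P$k$j * b else 0)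
        + (\<Sum>k\<in>UNIV. if k = j then cnj b * P$k$i * a + cnj b * P$k$j * b else 0)"
    unfolding sum.distrib[symmetric] by (rule sum.cong) (simp_all add: v_def algebra_simps)
  also have "\<dots> = cnj a * a * P$i$i + cnj a * b * P$i$j + cnj b * a * P$j$i + cnj b * b * P$j$j"
    by (simp add: algebra_simps)
  finally have "(\<Sum>k\<in>UNIV. \<Sum>l\<in>UNIV. cnj (v$k) * P$k$l * v$l)
      = cnj a * a * P$i$i + cnj a * b * P$i$j + cnj b * a * P$j$i + cnj b * b * P$j$j" .
  moreover have "Im (\<Sum>k\<in>UNIV. \<Sum>l\<in>UNIV. cnj (v$k) * P$k$l * v$l) = 0
      \<and> 0 \<le> Re (\<Sum>k\<in>UNIV. \<Sum>l\<in>UNIV. cnj (v$k) * P$k$l * v$l)"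
    using assms unfolding psd_def by blast
  ultimately show "Im (cnj a * a * P$i$i + cnj a * b * P$i$j + cnj b * a * P$j$i + cnj b * b * P$j$j) = 0"
    and "0 \<le> Re (cnj a * a * P$i$i + cnj a * b * P$i$j + cnj b * a * P$j$i + cnj b * b * P$j$j)"
    by simp_all
qed

lemma psd_diag:
  assumes "psd P"
  shows "Im (P$i$i) = 0" and "0 \<le> Re (P$i$i)"
  using psd_two_point[OF assms, of 1 i 0 i] by simp_all

lemma psd_hermitian:
  assumes "psd P"
  shows "P$j$i = cnj (P$i$j)"
proof -
  have "Im (P$i$j + P$j$i) = 0"
    using psd_two_point(1)[OF assms, of 1 i 1 j] psd_diag(1)[OF assms] by simp
  moreover have "Re (P$i$j - P$j$i) = 0"
    using psd_two_point(1)[OF assms, of 1 i \<i> j] psd_diag(1)[OF assms] by simp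
  ultimately show ?thesis by (simp add: complex_eq_iff)
qed

lemma psd_cmod_entry_le:
  assumes "psd P"
  shows "(cmod (P$i$j))\<^sup>2 \<le> Re (P$i$i) * Re (P$j$j)"
proof (rule le_mult_of_quadratic_nonneg)
  fix t :: real
  let ?z = "P$i$j" and ?a = "complex_of_real t" and ?b = "- cnj (P$i$j)"
  have "cnj ?z * ?z = of_real ((cmod ?z)\<^sup>2)"
    by (rule cnj_mult_self)
  then have "cnj ?a * ?a * P$i$i + cnj ?a * ?b * P$i$j + cnj ?b * ?a * P$j$i + cnj ?b * ?b * P$j$j
    = of_real (t\<^sup>2) * P$i$i - of_real (2 * (cmod ?z)\<^sup>2 * t) + of_real ((cmod ?z)\<^sup>2) * P$j$j"
    unfolding psd_hermitian[OF assms, of i j] by (simp add: algebra_simps power2_eq_square)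
  then have "Re (cnj ?a * ?a * P$i$i + cnj ?a * ?b * P$i$j + cnj ?b * ?a * P$j$i + cnj ?b * ?b * P$j$j)
    = Re (P$i$i) * t\<^sup>2 - 2 * (cmod ?z)\<^sup>2 * t + (cmod ?z)\<^sup>2 * Re (P$j$j)"
    by simp
  with psd_two_point(2)[OF assms, of ?a i ?b j]
  show "0 \<le> Re (P$i$i) * t\<^sup>2 - 2 * (cmod ?z)\<^sup>2 * t + (cmod ?z)\<^sup>2 * Re (P$j$j)"
    by simp
qed (use psd_diag(2)[OF assms] in auto)

lemma psd_cmod_add_entries_le:
  assumes "psd P"
  shows "(cmod (P$i$j + P$k$l))\<^sup>2 \<le> (Re (P$i$i) + Re (P$l$l)) * (Re (P$j$j) + Re (P$k$k))"
proof -
  have "(cmod (P$i$j + P$k$l))\<^sup>2 \<le> (cmod (P$i$j) + cmod (P$k$l))\<^sup>2"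
    by (simp add: norm_triangle_ineq power_mono)
  also have "\<dots> \<le> (Re (P$i$i) + Re (P$l$l)) * (Re (P$j$j) + Re (P$k$k))"
    using psd_cmod_entry_le[OF assms, of i j] psd_cmod_entry_le[OF assms, of k l] psd_diag(2)[OF assms]
    by (intro square_add_le_mult_add) (simp_all add: mult.commute)
  finally show ?thesis .
qed

definition gram :: "('n::finite \<Rightarrow> 'k::finite \<Rightarrow> complex) \<Rightarrow> complex^'n^'n" where
  "gram g = (\<chi> p q. \<Sum>k\<in>UNIV. g p k * cnj (g q k))"

lemma psd_gram: "psd (gram g)"
  unfolding psd_def
proof
  fix v
  define h where "h k = (\<Sum>j\<in>UNIV. cnj (g j k) * v$j)" for k
  have "(\<Sum>i\<in>UNIV. \<Sum>j\<in>UNIV. cnj (v$i) * gram g $i$j * v$j)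
      = (\<Sum>i\<in>UNIV. \<Sum>j\<in>UNIV. \<Sum>k\<in>UNIV. cnj (v$i) * g i k * cnj (g j k) * v$j)"
    by (simp add: gram_def sum_distrib_left sum_distrib_right mult.assoc)
  also have "\<dots> = (\<Sum>i\<in>UNIV. \<Sum>k\<in>UNIV. \<Sum>j\<in>UNIV. cnj (v$i) * g i k * cnj (g j k) * v$j)"
    by (rule sum.cong[OF refl], rule sum.swap)
  also have "\<dots> = (\<Sum>k\<in>UNIV. \<Sum>i\<in>UNIV. \<Sum>j\<in>UNIV. cnj (v$i) * g i k * cnj (g j k) * v$j)"
    by (rule sum.swap)
  also have "\<dots> = (\<Sum>k\<in>UNIV. cnj (h k) * h k)"
    by (simp add: h_def sum_product mult.assoc mult.left_commute)
  also have "\<dots> = (\<Sum>k\<in>UNIV. of_real ((cmod (h k))\<^sup>2))"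
    by (simp add: cnj_mult_self)
  finally show "Im (\<Sum>i\<in>UNIV. \<Sum>j\<in>UNIV. cnj (v$i) * gram g $i$j * v$j) = 0 \<and>
      0 \<le> Re (\<Sum>i\<in>UNIV. \<Sum>j\<in>UNIV. cnj (v$i) * gram g $i$j * v$j)"
    by (simp add: sum_nonneg)
qed

lemma gram_tensor_entry:
  fixes c :: "'a::finite \<times> 'b::finite \<Rightarrow> complex"
    and x :: "'a \<Rightarrow> 'k::finite \<Rightarrow> complex" and y :: "'b \<Rightarrow> 'l::finite \<Rightarrow> complex"
  shows "gram (\<lambda>p k. c p * x (fst p) (fst k) * y (snd p) (snd k)) $ p $ q
    = c p * cnj (c q) * gram x $ fst p $ fst q * gram y $ snd p $ snd q"
proof -
  have "gram (\<lambda>p k. c p * x (fst p) (fst k) * y (snd p) (snd k)) $ p $ q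
      = (\<Sum>k\<in>UNIV. \<Sum>l\<in>UNIV. c p * cnj (c q) * ((x (fst p) k * cnj (x (fst q) k))
           * (y (snd p) l * cnj (y (snd q) l))))"
    by (simp add: gram_def sum.cartesian_product' mult_ac flip: UNIV_Times_UNIV)
  also have "\<dots> = c p * cnj (c q) * ((\<Sum>k\<in>UNIV. x (fst p) k * cnj (x (fst q) k))
      * (\<Sum>l\<in>UNIV. y (snd p) l * cnj (y (snd q) l)))"
    unfolding sum_product by (simp only: sum_distrib_left mult.assoc)
  also have "\<dots> = c p * cnj (c q) * gram x $ fst p $ fst q * gram y $ snd p $ snd q"
    by (simp only: gram_def vec_lambda_beta mult.assoc)
  finally show ?thesis .
qed

lemma C_z2_entry: "C_z2 $ (i,j) $ (k,l) = (if i = k \<and> j = l \<and> i \<noteq> j then 4 else 0)"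
proof -
  let ?M = "kron sigma_z (transpose (mat 1)) - kron (mat 1) (transpose sigma_z)"
  have M: "?M $ (i,j) $ (k,l) = (if i = k \<and> j = l
      then (if i = 0 then 1 else -1) - (if j = 0 then 1 else -1) else 0)" for i j k l
    by (simp add: kron_def mat_def transpose_def sigma_z_def)
  have "C_z2 $ (i,j) $ (k,l) = (\<Sum>r\<in>UNIV. ?M $ (i,j) $ r * ?M $ r $ (k,l))"
    by (simp add: C_z2_def Let_def matrix_matrix_mult_def)
  also have "\<dots> = (if i = k \<and> j = l \<and> i \<noteq> j then 4 else 0)"
    unfolding sum_UNIV_2_times_2 M
    using exhaust_2_zero_one[of i] exhaust_2_zero_one[of j] exhaust_2_zero_one[of k]
      exhaust_2_zero_one[of l]
    by (elim disjE) simp_all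
  finally show ?thesis .
qed

definition mismatch_weight :: "qqmat \<Rightarrow> real" where
  "mismatch_weight P = Re (P$(0,1)$(0,1) + P$(1,0)$(1,0))"

lemma Re_trace_mult_C_z2: "Re (trace (P ** C_z2)) = 4 * mismatch_weight P"
  by (simp add: trace_def matrix_matrix_mult_def sum_UNIV_2_times_2 C_z2_entry mismatch_weight_def)

lemma trace_ptrace_dual: "trace (ptrace_dual P) = trace P"
  unfolding trace_def ptrace_dual_def UNIV_Times_UNIV[symmetric] sum.cartesian_product' by simp

lemma states2_diag_sum:
  assumes "P \<in> states2"
  shows "Re (P$(0,0)$(0,0)) + Re (P$(1,1)$(1,1)) = 1 - mismatch_weight P"
proof -
  have "Re (trace P) = 1" using assms by (simp add: states2_def)
  then show ?thesis by (simp add: trace_def sum_UNIV_2_times_2 mismatch_weight_def)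
qed

lemma states2_cmod_ptrace_le:
  assumes "P \<in> states2"
  shows "(cmod (ptrace_dual P $ 0 $ 1))\<^sup>2 \<le> (1 - mismatch_weight P) * mismatch_weight P"
    and "(cmod (ptrace_H P $ 0 $ 1))\<^sup>2 \<le> (1 - mismatch_weight P) * mismatch_weight P"
proof -
  have "psd P" using assms by (simp add: states2_def)
  note bound = psd_cmod_add_entries_le[OF this, of "(0,0)" _ _ "(1,1)",
      unfolded states2_diag_sum[OF assms]]
  show "(cmod (ptrace_dual P $ 0 $ 1))\<^sup>2 \<le> (1 - mismatch_weight P) * mismatch_weight P"
    using bound[of "(1,0)" "(0,1)"]
    by (simp add: ptrace_dual_def sum_UNIV_2 mismatch_weight_def add.commute)
  show "(cmod (ptrace_H P $ 0 $ 1))\<^sup>2 \<le> (1 - mismatch_weight P) * mismatch_weight P"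
    using bound[of "(0,1)" "(1,0)"] by (simp add: ptrace_H_def sum_UNIV_2 mismatch_weight_def)
qed

definition coherence_mat :: "complex \<Rightarrow> qmat" where
  "coherence_mat \<zeta> = (\<chi> i j. if i = j then 1 else if i = 0 then \<zeta> else cnj \<zeta>)"

lemma transpose_coherence_mat: "transpose (coherence_mat \<zeta>) = coherence_mat (cnj \<zeta>)"
  by (simp add: vec_eq_iff forall_2_zero_one transpose_def coherence_mat_def)

lemma mismatch_weight_ge_coherence:
  assumes "P \<in> couplings ((1/2) *\<^sub>R coherence_mat \<zeta>\<^sub>1) ((1/2) *\<^sub>R coherence_mat \<zeta>\<^sub>2)"
  shows "2 - 2 * sqrt (1 - (max (cmod \<zeta>\<^sub>1) (cmod \<zeta>\<^sub>2))\<^sup>2) \<le> 4 * mismatch_weight P"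
proof -
  have P: "P \<in> states2" "ptrace_dual P = (1/2) *\<^sub>R coherence_mat \<zeta>\<^sub>2"
    "ptrace_H P = (1/2) *\<^sub>R coherence_mat (cnj \<zeta>\<^sub>1)"
    using assms by (simp_all add: couplings_def transpose_scalar transpose_coherence_mat)
  have "(cmod \<zeta>\<^sub>1)\<^sup>2 \<le> 4 * mismatch_weight P * (1 - mismatch_weight P)"
    using states2_cmod_ptrace_le(2)[OF P(1)]
    by (simp add: P(3) coherence_mat_def norm_divide power_divide mult_ac)
  moreover have "(cmod \<zeta>\<^sub>2)\<^sup>2 \<le> 4 * mismatch_weight P * (1 - mismatch_weight P)"
    using states2_cmod_ptrace_le(1)[OF P(1)]
    by (simp add: P(2) coherence_mat_def norm_divide power_divide mult_ac)
  ultimately have "(max (cmod \<zeta>\<^sub>1) (cmod \<zeta>\<^sub>2))\<^sup>2 \<le> 4 * mismatch_weight P * (1 - mismatch_weight P)"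
    by (simp add: max_def)
  then show ?thesis
    using abs_one_minus_double_le_sqrt by fastforce
qed

definition coherence_vectors :: "complex \<Rightarrow> 2 \<Rightarrow> 2 \<Rightarrow> complex" where
  "coherence_vectors \<zeta> i k = (if i = 0 then (if k = 0 then 1 else 0)
     else if k = 0 then cnj \<zeta> else of_real (sqrt (1 - (cmod \<zeta>)\<^sup>2)))"

lemma gram_coherence_vectors:
  assumes "cmod \<zeta> \<le> 1"
  shows "gram (coherence_vectors \<zeta>) = coherence_mat \<zeta>"
proof -
  have "0 \<le> 1 - (cmod \<zeta>)\<^sup>2"
    using assms by (simp add: power_le_one)
  moreover have "cnj \<zeta> * \<zeta> = of_real ((cmod \<zeta>)\<^sup>2)"
    by (rule cnj_mult_self)
  ultimately have "cnj \<zeta> * \<zeta> + of_real (sqrt (1 - (cmod \<zeta>)\<^sup>2)) * of_real (sqrt (1 - (cmod \<zeta>)\<^sup>2)) = 1"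
    by (simp flip: of_real_mult)
  then show ?thesis
    by (simp add: vec_eq_iff forall_2_zero_one gram_def coherence_mat_def coherence_vectors_def
        sum_UNIV_2)
qed

definition coupling_witness :: "real \<Rightarrow> real \<Rightarrow> complex \<Rightarrow> complex \<Rightarrow> qqmat" where
  "coupling_witness \<alpha> \<beta> \<mu> \<nu> = gram (\<lambda>p k. of_real (if fst p = snd p then \<beta> else \<alpha>)
     * coherence_vectors \<mu> (fst p) (fst k) * coherence_vectors \<nu> (snd p) (snd k))"

lemma coupling_witness_entry:
  assumes "cmod \<mu> \<le> 1" "cmod \<nu> \<le> 1"
  shows "coupling_witness \<alpha> \<beta> \<mu> \<nu> $ (i,j) $ (k,l)
    = of_real ((if i = j then \<beta> else \<alpha>) * (if k = l then \<beta> else \<alpha>))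
      * coherence_mat \<mu> $ i $ k * coherence_mat \<nu> $ j $ l"
  unfolding coupling_witness_def
  by (simp add: gram_tensor_entry[where c = "\<lambda>p. of_real (if fst p = snd p then \<beta> else \<alpha>)"
      and x = "coherence_vectors \<mu>" and y = "coherence_vectors \<nu>"] gram_coherence_vectors assms)

lemma coupling_witness_marginals:
  assumes "cmod \<mu> \<le> 1" "cmod \<nu> \<le> 1" "\<alpha>\<^sup>2 + \<beta>\<^sup>2 = 1/2"
  shows "ptrace_dual (coupling_witness \<alpha> \<beta> \<mu> \<nu>) = (1/2) *\<^sub>R coherence_mat (of_real (4 * \<alpha> * \<beta>) * \<mu>)"
    and "ptrace_H (coupling_witness \<alpha> \<beta> \<mu> \<nu>) = (1/2) *\<^sub>R coherence_mat (of_real (4 * \<alpha> * \<beta>) * \<nu>)"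
proof -
  have "\<alpha> * \<alpha> = 1/2 - \<beta> * \<beta>"
    using assms(3) by (simp add: power2_eq_square)
  then have half: "complex_of_real \<alpha> * complex_of_real \<alpha> = 1/2 - complex_of_real \<beta> * complex_of_real \<beta>"
    by (simp flip: of_real_mult)
  show "ptrace_dual (coupling_witness \<alpha> \<beta> \<mu> \<nu>) = (1/2) *\<^sub>R coherence_mat (of_real (4 * \<alpha> * \<beta>) * \<mu>)"
    unfolding vec_eq_iff ptrace_dual_def
    by (simp add: forall_2_zero_one sum_UNIV_2 coupling_witness_entry[OF assms(1,2)]
        coherence_mat_def half scaleR_conv_of_real[where 'a = complex])
  show "ptrace_H (coupling_witness \<alpha> \<beta> \<mu> \<nu>) = (1/2) *\<^sub>R coherence_mat (of_real (4 * \<alpha> * \<beta>) * \<nu>)"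
    unfolding vec_eq_iff ptrace_H_def
    by (simp add: forall_2_zero_one sum_UNIV_2 coupling_witness_entry[OF assms(1,2)]
        coherence_mat_def half scaleR_conv_of_real[where 'a = complex])
qed

lemma coupling_witness_in_states2:
  assumes "cmod \<mu> \<le> 1" "cmod \<nu> \<le> 1" "\<alpha>\<^sup>2 + \<beta>\<^sup>2 = 1/2"
  shows "coupling_witness \<alpha> \<beta> \<mu> \<nu> \<in> states2"
proof -
  have "psd (coupling_witness \<alpha> \<beta> \<mu> \<nu>)"
    unfolding coupling_witness_def by (rule psd_gram)
  moreover have "trace (coupling_witness \<alpha> \<beta> \<mu> \<nu>) = 1"
    unfolding trace_ptrace_dual[symmetric] coupling_witness_marginals(1)[OF assms]
    by (simp add: trace_def sum_UNIV_2 coherence_mat_def scaleR_conv_of_real[where 'a = complex])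
  ultimately show ?thesis by (simp add: states2_def)
qed

lemma mismatch_weight_coupling_witness:
  assumes "cmod \<mu> \<le> 1" "cmod \<nu> \<le> 1"
  shows "mismatch_weight (coupling_witness \<alpha> \<beta> \<mu> \<nu>) = 2 * \<alpha>\<^sup>2"
  by (simp add: mismatch_weight_def coupling_witness_entry[OF assms] coherence_mat_def power2_eq_square)

lemma exists_coupling_with_mismatch:
  assumes "0 \<le> m" "m \<le> 1" "cmod \<mu> \<le> 1" "cmod \<nu> \<le> 1"
  shows "\<exists>P\<in>states2. ptrace_dual P = (1/2) *\<^sub>R coherence_mat (of_real m * \<mu>)
    \<and> ptrace_H P = (1/2) *\<^sub>R coherence_mat (of_real m * \<nu>)
    \<and> 4 * mismatch_weight P = 2 - 2 * sqrt (1 - m\<^sup>2)"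
proof -
  \<comment> \<open>\<open>\<alpha>\<^sup>2 + \<beta>\<^sup>2 = 1/2\<close> gives unit trace, \<open>4 \<alpha> \<beta> = m\<close> the prescribed coherences.\<close>
  define s where "s = sqrt (1 - m\<^sup>2)"
  have s: "0 \<le> s" "s \<le> 1" "s\<^sup>2 = 1 - m\<^sup>2"
    using assms(1,2) by (simp_all add: s_def power_le_one)
  define \<alpha> where "\<alpha> = sqrt ((1 - s) / 4)"
  define \<beta> where "\<beta> = sqrt ((1 + s) / 4)"
  have \<alpha>\<beta>: "\<alpha>\<^sup>2 = (1 - s) / 4" "\<beta>\<^sup>2 = (1 + s) / 4" "0 \<le> \<alpha>" "0 \<le> \<beta>"
    using s by (simp_all add: \<alpha>_def \<beta>_def)
  have "(4 * \<alpha> * \<beta>)\<^sup>2 = (4 * \<alpha>\<^sup>2) * (4 * \<beta>\<^sup>2)"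
    by (simp add: power_mult_distrib)
  also have "\<dots> = 1 - s\<^sup>2"
    by (simp only: \<alpha>\<beta>(1,2)) (simp add: field_simps power2_eq_square)
  also have "\<dots> = m\<^sup>2"
    using s by simp
  finally have m: "4 * \<alpha> * \<beta> = m"
    using \<alpha>\<beta> assms(1) by simp
  have sum: "\<alpha>\<^sup>2 + \<beta>\<^sup>2 = 1/2"
    using \<alpha>\<beta> by simp
  define P where "P = coupling_witness \<alpha> \<beta> \<mu> \<nu>"
  have "P \<in> states2"
    unfolding P_def using assms(3,4) sum by (rule coupling_witness_in_states2)
  moreover have "ptrace_dual P = (1/2) *\<^sub>R coherence_mat (of_real m * \<mu>)"
    "ptrace_H P = (1/2) *\<^sub>R coherence_mat (of_real m * \<nu>)"
    unfolding P_def coupling_witness_marginals[OF assms(3,4) sum] m by simp_all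
  moreover have "4 * mismatch_weight P = 2 - 2 * sqrt (1 - m\<^sup>2)"
    unfolding P_def mismatch_weight_coupling_witness[OF assms(3,4)] \<alpha>\<beta>(1) s_def by simp
  ultimately show ?thesis by blast
qed

lemma exists_unit_disc_scaled:
  assumes "cmod z \<le> m"
  shows "\<exists>\<nu>. cmod \<nu> \<le> 1 \<and> z = of_real m * \<nu>"
proof (cases "m = 0")
  case True
  with assms show ?thesis by (auto intro!: exI[of _ 0])
next
  case False
  with assms have "0 < m" using norm_ge_zero[of z] by linarith
  then show ?thesis
    using assms by (intro exI[of _ "z / of_real m"]) (simp add: norm_divide)
qed

lemma D2_z2_half_coherence_mat:
  assumes "cmod \<zeta>\<^sub>1 \<le> 1" "cmod \<zeta>\<^sub>2 \<le> 1"
  shows "D2_z2 ((1/2) *\<^sub>R coherence_mat \<zeta>\<^sub>1) ((1/2) *\<^sub>R coherence_mat \<zeta>\<^sub>2)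
    = 2 - 2 * sqrt (1 - (max (cmod \<zeta>\<^sub>1) (cmod \<zeta>\<^sub>2))\<^sup>2)"
proof -
  define m where "m = max (cmod \<zeta>\<^sub>1) (cmod \<zeta>\<^sub>2)"
  have m: "0 \<le> m" "m \<le> 1" "cmod (cnj \<zeta>\<^sub>1) \<le> m" "cmod \<zeta>\<^sub>2 \<le> m"
    using assms by (auto simp: m_def le_max_iff_disj)
  obtain \<nu> \<mu> where "cmod \<nu> \<le> 1" "cnj \<zeta>\<^sub>1 = of_real m * \<nu>" "cmod \<mu> \<le> 1" "\<zeta>\<^sub>2 = of_real m * \<mu>"
    using exists_unit_disc_scaled[OF m(3)] exists_unit_disc_scaled[OF m(4)] by blast
  with exists_coupling_with_mismatch[OF m(1,2)] obtain P where P: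
    "P \<in> couplings ((1/2) *\<^sub>R coherence_mat \<zeta>\<^sub>1) ((1/2) *\<^sub>R coherence_mat \<zeta>\<^sub>2)"
    "4 * mismatch_weight P = 2 - 2 * sqrt (1 - m\<^sup>2)"
    by (fastforce simp: couplings_def transpose_scalar transpose_coherence_mat)
  show ?thesis
    unfolding D2_z2_def Re_trace_mult_C_z2 m_def[symmetric]
  proof (rule cInf_eq_minimum)
    show "2 - 2 * sqrt (1 - m\<^sup>2) \<in> (\<lambda>P. 4 * mismatch_weight P)
        ` couplings ((1/2) *\<^sub>R coherence_mat \<zeta>\<^sub>1) ((1/2) *\<^sub>R coherence_mat \<zeta>\<^sub>2)"
      by (rule rev_image_eqI[OF P(1)]) (simp add: P(2))
    show "2 - 2 * sqrt (1 - m\<^sup>2) \<le> x"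
      if "x \<in> (\<lambda>P. 4 * mismatch_weight P)
        ` couplings ((1/2) *\<^sub>R coherence_mat \<zeta>\<^sub>1) ((1/2) *\<^sub>R coherence_mat \<zeta>\<^sub>2)" for x
      using that mismatch_weight_ge_coherence by (auto simp: m_def)
  qed
qed

lemma rho_equatorial:
  fixes r :: "real^3"
  assumes "r$3 = 0"
  shows "rho r = (1/2) *\<^sub>R coherence_mat (Complex (r$1) (- r$2))"
  using assms
  by (simp add: vec_eq_iff forall_2_zero_one rho_def sigma_x_def sigma_y_def sigma_z_def mat_def
      coherence_mat_def complex_eq_iff)

lemma cmod_equatorial:
  fixes r :: "real^3"
  assumes "r$3 = 0"
  shows "cmod (Complex (r$1) (- r$2)) = norm r"
  using assms by (simp add: complex_norm norm_vec_def L2_set_def sum_3)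

lemma D2_z2_rho_equatorial:
  assumes "r$3 = 0" "s$3 = 0" "norm r \<le> 1" "norm s \<le> 1"
  shows "D2_z2 (rho r) (rho s) = 2 - 2 * sqrt (1 - (max (norm r) (norm s))\<^sup>2)"
  using D2_z2_half_coherence_mat[of "Complex (r$1) (- r$2)" "Complex (s$1) (- s$2)"] assms
  by (simp add: rho_equatorial cmod_equatorial)

theorem corollary3p7:
  fixes r1 r2 :: "real^3"
  assumes "norm r1 \<le> 1" and "norm r2 \<le> 1"
    and "r1 \<bullet> vector [0, 0, 1] = 0" and "r2 \<bullet> vector [0, 0, 1] = 0"
  shows "(d_z2 (rho r1) (rho r2))\<^sup>2
       = sqrt (1 - (min (norm r1) (norm r2))\<^sup>2) - sqrt (1 - (max (norm r1) (norm r2))\<^sup>2)"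
proof -
  have z: "r1$3 = 0" "r2$3 = 0"
    using assms(3,4) by (simp_all add: inner_vec_def sum_3)
  note D2 = D2_z2_rho_equatorial[OF z assms(1,2)] D2_z2_rho_equatorial[OF z(1) z(1) assms(1) assms(1)]
    D2_z2_rho_equatorial[OF z(2) z(2) assms(2) assms(2)]
  have "sqrt (1 - (max (norm r1) (norm r2))\<^sup>2) \<le> sqrt (1 - (min (norm r1) (norm r2))\<^sup>2)"
    by (simp add: power_mono)
  moreover have "D2_z2 (rho r1) (rho r2) - (1/2) * (D2_z2 (rho r1) (rho r1) + D2_z2 (rho r2) (rho r2))
      = sqrt (1 - (min (norm r1) (norm r2))\<^sup>2) - sqrt (1 - (max (norm r1) (norm r2))\<^sup>2)"
    unfolding D2 by (simp add: max_def min_def algebra_simps)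
  ultimately show ?thesis
    unfolding d_z2_def by simp
qed

end
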